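(* Let $G$ be a finite non-abelian group. Then the non-centralizer graph $\Upsilon_G$ is regular if and only if $|\mathrm{Cent}(G)|=[G:Z(G)]$.
   Context: For a finite group $G$ and $x\in G$, $C_G(x)$ denotes the centralizer of $x$, $Z(G)$ the center, and $\mathrm{Cent}(G)=\{C_G(x)\mid x\in G\}$ the set of distinct centralizers of $G$. The non-centralizer graph $\Upsilon_G$ is the simple graph with vertex set $G$ in which two distinct vertices $x,y$ are adjacent if and only if $C_G(x)\neq C_G(y)$. A graph is regular if all its vertices have the same degree. *)

theory Defs
  imports "HOL-Algebra.Algebra"
begin

definition centralizer :: "('a, 'b) monoid_scheme \<Rightarrow> 'a \<Rightarrow> 'a set" where
  "centralizer G x = {y \<in> carrier G. x \<otimes>\<^bsub>G\<^esub> y = y \<otimes>\<^bsub>G\<^esub> x}"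

definition group_center :: "('a, 'b) monoid_scheme \<Rightarrow> 'a set" where
  "group_center G = {z \<in> carrier G. \<forall>y \<in> carrier G. z \<otimes>\<^bsub>G\<^esub> y = y \<otimes>\<^bsub>G\<^esub> z}"

definition Cent :: "('a, 'b) monoid_scheme \<Rightarrow> 'a set set" where
  "Cent G = centralizer G ` carrier G"

definition noncent_adj :: "('a, 'b) monoid_scheme \<Rightarrow> 'a \<Rightarrow> 'a \<Rightarrow> bool" where
  "noncent_adj G x y \<longleftrightarrow> x \<in> carrier G \<and> y \<in> carrier G \<and> x \<noteq> y \<and>
     centralizer G x \<noteq> centralizer G y"

definition noncent_degree :: "('a, 'b) monoid_scheme \<Rightarrow> 'a \<Rightarrow> nat" where
  "noncent_degree G x = card {y \<in> carrier G. noncent_adj G x y}"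

definition noncent_regular :: "('a, 'b) monoid_scheme \<Rightarrow> bool" where
  "noncent_regular G \<longleftrightarrow>
     (\<forall>x \<in> carrier G. \<forall>y \<in> carrier G. noncent_degree G x = noncent_degree G y)"

end

theory Submission
  imports Defs
begin

text \<open>Group the elements of \<open>G\<close> by their centralizer. A vertex \<open>x\<close> of the non-centralizer
graph is adjacent exactly to the elements outside its class, so its degree is \<open>|G|\<close> minus the
size of that class. Every class is a union of cosets of \<open>Z(G)\<close>, hence has at least \<open>|Z(G)|\<close>
elements, with equality for the class of \<open>1\<close>, which is \<open>Z(G)\<close> itself. So the graph is regular
iff every class has exactly \<open>|Z(G)|\<close> elements, and since the \<open>|Cent(G)|\<close> classes partition \<open>G\<close>
this happens iff \<open>|Cent(G)| \<cdot> |Z(G)| = |G|\<close>, i.e. iff \<open>|Cent(G)| = [G : Z(G)]\<close>.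
The proof never uses that \<open>G\<close> is non-abelian; for abelian \<open>G\<close> both sides are trivially true.\<close>

definition centralizer_class :: "('a, 'b) monoid_scheme \<Rightarrow> 'a set \<Rightarrow> 'a set" where
  "centralizer_class G c = {y \<in> carrier G. centralizer G y = c}"

lemma sum_eq_card_mult_iff_all_eq:
  fixes f :: "'a \<Rightarrow> nat"
  assumes "finite A" and "\<And>a. a \<in> A \<Longrightarrow> m \<le> f a"
  shows "(\<Sum>a\<in>A. f a) = card A * m \<longleftrightarrow> (\<forall>a\<in>A. f a = m)"
proof
  assume sum_eq: "(\<Sum>a\<in>A. f a) = card A * m"
  show "\<forall>a\<in>A. f a = m"
  proof (rule ccontr)
    assume "\<not> (\<forall>a\<in>A. f a = m)"
    then obtain a where "a \<in> A" "m < f a"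
      using assms(2) le_neq_implies_less by blast
    then have "(\<Sum>a\<in>A. m) < (\<Sum>a\<in>A. f a)"
      by (intro sum_strict_mono_ex1[OF assms(1)]) (use assms(2) in auto)
    then show False using sum_eq by (simp add: mult.commute)
  qed
qed simp

lemma group_centerI:
  "\<lbrakk>z \<in> carrier G; \<And>y. y \<in> carrier G \<Longrightarrow> z \<otimes>\<^bsub>G\<^esub> y = y \<otimes>\<^bsub>G\<^esub> z\<rbrakk> \<Longrightarrow> z \<in> group_center G"
  unfolding group_center_def by blast

lemma group_centerD:
  assumes "z \<in> group_center G"
  shows "z \<in> carrier G" and "y \<in> carrier G \<Longrightarrow> z \<otimes>\<^bsub>G\<^esub> y = y \<otimes>\<^bsub>G\<^esub> z"
  using assms unfolding group_center_def by blast+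

lemma group_center_subset_carrier: "group_center G \<subseteq> carrier G"
  by (blast dest: group_centerD(1))

lemma subgroup_group_center:
  fixes G (structure)
  assumes "group G"
  shows "subgroup (group_center G) G"
proof -
  interpret group G by fact
  show ?thesis
  proof
    show "group_center G \<subseteq> carrier G"
      by (rule group_center_subset_carrier)
    show "\<one> \<in> group_center G"
      by (rule group_centerI) simp_all
  next
    fix x y assume x: "x \<in> group_center G" and y: "y \<in> group_center G"
    note x_carr = group_centerD(1)[OF x] and y_carr = group_centerD(1)[OF y]
    show "x \<otimes> y \<in> group_center G"
    proof (rule group_centerI)
      fix w assume w: "w \<in> carrier G"
      have "x \<otimes> y \<otimes> w = x \<otimes> (w \<otimes> y)"
        using w x_carr y_carr group_centerD(2)[OF y w] by (simp add: m_assoc)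
      also have "\<dots> = (x \<otimes> w) \<otimes> y"
        using w x_carr y_carr by (simp add: m_assoc)
      also have "\<dots> = w \<otimes> (x \<otimes> y)"
        using w x_carr y_carr group_centerD(2)[OF x w] by (simp add: m_assoc)
      finally show "x \<otimes> y \<otimes> w = w \<otimes> (x \<otimes> y)" .
    qed (use x_carr y_carr in simp)
    show "inv x \<in> group_center G"
    proof (rule group_centerI)
      fix w assume w: "w \<in> carrier G"
      have "inv x \<otimes> w = inv x \<otimes> (w \<otimes> x) \<otimes> inv x"
        using w x_carr by (simp add: m_assoc)
      also have "\<dots> = inv x \<otimes> (x \<otimes> w) \<otimes> inv x"
        using group_centerD(2)[OF x w] by simp
      also have "\<dots> = w \<otimes> inv x"
        using w x_carr by (simp add: m_assoc[symmetric])
      finally show "inv x \<otimes> w = w \<otimes> inv x" .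
    qed (use x_carr in simp)
  qed
qed

lemma centralizer_mult_center:
  fixes G (structure)
  assumes "group G" and x: "x \<in> carrier G" and z: "z \<in> group_center G"
  shows "centralizer G (x \<otimes> z) = centralizer G x"
proof -
  interpret group G by fact
  note z_carr = group_centerD(1)[OF z]
  have "(x \<otimes> z) \<otimes> w = w \<otimes> (x \<otimes> z) \<longleftrightarrow> x \<otimes> w = w \<otimes> x" if w: "w \<in> carrier G" for w
  proof -
    have "(x \<otimes> z) \<otimes> w = (x \<otimes> w) \<otimes> z"
      using w x z_carr group_centerD(2)[OF z w] by (simp add: m_assoc)
    moreover have "w \<otimes> (x \<otimes> z) = (w \<otimes> x) \<otimes> z"
      using w x z_carr by (simp add: m_assoc)
    ultimately show ?thesis using w x z_carr by simp
  qed
  then show ?thesis unfolding centralizer_def by auto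
qed

lemma card_center_le_card_centralizer_class:
  fixes G (structure)
  assumes "group G" and "finite (carrier G)" and "c \<in> Cent G"
  shows "card (group_center G) \<le> card (centralizer_class G c)"
proof -
  interpret group G by fact
  obtain x where x: "x \<in> carrier G" and c: "c = centralizer G x"
    using assms(3) unfolding Cent_def by auto
  note center = group_center_subset_carrier[of G]
  have "inj_on ((\<otimes>) x) (group_center G)"
    using x center by (intro inj_onI) (auto dest: l_cancel)
  moreover have "(\<otimes>) x ` group_center G \<subseteq> centralizer_class G c"
    using x c center centralizer_mult_center[OF assms(1) x]
    unfolding centralizer_class_def by auto
  moreover have "finite (centralizer_class G c)"
    using assms(2) unfolding centralizer_class_def by auto
  ultimately show ?thesis using card_inj_on_le by blast
qed

lemma centralizer_class_carrier:
  "centralizer_class G (carrier G) = group_center G"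
  unfolding centralizer_class_def group_center_def centralizer_def by auto

lemma card_carrier_eq_sum_centralizer_classes:
  assumes "finite (carrier G)"
  shows "card (carrier G) = (\<Sum>c\<in>Cent G. card (centralizer_class G c))"
proof -
  have "carrier G = (\<Union>c\<in>Cent G. centralizer_class G c)"
    unfolding centralizer_class_def Cent_def by auto
  moreover have "card (\<Union>c\<in>Cent G. centralizer_class G c)
      = (\<Sum>c\<in>Cent G. card (centralizer_class G c))"
    using assms by (intro card_UN_disjoint) (auto simp: Cent_def centralizer_class_def)
  ultimately show ?thesis by simp
qed

lemma noncent_degree_eq:
  assumes "finite (carrier G)" and "x \<in> carrier G"
  shows "noncent_degree G x = card (carrier G) - card (centralizer_class G (centralizer G x))"
proof -
  have "{y \<in> carrier G. noncent_adj G x y} = carrier G - centralizer_class G (centralizer G x)"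
    using assms(2) unfolding noncent_adj_def centralizer_class_def by auto
  moreover have "centralizer_class G (centralizer G x) \<subseteq> carrier G"
    unfolding centralizer_class_def by auto
  ultimately show ?thesis
    unfolding noncent_degree_def using assms(1) by (simp add: card_Diff_subset finite_subset)
qed

lemma noncent_regular_iff_centralizer_classes:
  fixes G (structure)
  assumes "group G" and fin: "finite (carrier G)"
  shows "noncent_regular G \<longleftrightarrow>
         (\<forall>c\<in>Cent G. card (centralizer_class G c) = card (group_center G))"
proof -
  interpret group G by fact
  have class_le: "card (centralizer_class G c) \<le> card (carrier G)" for c
    using fin unfolding centralizer_class_def by (simp add: card_mono)
  have centralizer_one: "centralizer G \<one> = carrier G"
    unfolding centralizer_def by auto
  have "noncent_degree G x = noncent_degree G \<one> \<longleftrightarrow>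
        card (centralizer_class G (centralizer G x)) = card (group_center G)"
    if "x \<in> carrier G" for x
    using noncent_degree_eq[OF fin that] noncent_degree_eq[OF fin one_closed]
      class_le[of "centralizer G x"] class_le[of "carrier G"]
    by (simp add: centralizer_one centralizer_class_carrier) linarith
  then show ?thesis
    unfolding noncent_regular_def Cent_def by (metis (no_types, lifting) image_iff one_closed)
qed

lemma card_rcosets_center_mult:
  fixes G (structure)
  assumes "group G" and "finite (carrier G)"
  shows "card (rcosets (group_center G)) * card (group_center G) = card (carrier G)"
  using group.lagrange[OF assms(1) subgroup_group_center[OF assms(1)]] by (simp add: order_def)

theorem corollary2p5:
  fixes G :: "('a, 'b) monoid_scheme"
  assumes "group G" and "finite (carrier G)" and "\<not> comm_group G"
  shows "noncent_regular G \<longleftrightarrow>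
         card (Cent G) = card (rcosets\<^bsub>G\<^esub> (group_center G))"
proof -
  let ?Z = "group_center G"
  have "finite ?Z" "?Z \<noteq> {}"
    using subgroup_group_center[OF assms(1)] assms(2)
    by (auto intro: finite_subset dest: subgroup.subset subgroup.one_closed)
  then have "card ?Z > 0" by (simp add: card_gt_0_iff)
  then have "card (Cent G) = card (rcosets\<^bsub>G\<^esub> ?Z) \<longleftrightarrow> card (Cent G) * card ?Z = card (carrier G)"
    using card_rcosets_center_mult[OF assms(1,2)] by (metis mult_right_cancel not_less0)
  also have "\<dots> \<longleftrightarrow> (\<forall>c\<in>Cent G. card (centralizer_class G c) = card ?Z)"
    using card_carrier_eq_sum_centralizer_classes[OF assms(2)]
      sum_eq_card_mult_iff_all_eq[of "Cent G" "card ?Z" "\<lambda>c. card (centralizer_class G c)"]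
      card_center_le_card_centralizer_class[OF assms(1,2)] assms(2)
    by (metis Cent_def finite_imageI)
  also have "\<dots> \<longleftrightarrow> noncent_regular G"
    using noncent_regular_iff_centralizer_classes[OF assms(1,2)] by simp
  finally show ?thesis by simp
qed

end
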